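(* Under the standing assumptions below, let $\{\rho_k\}$, $\{\epsilon_k\}$ be positive sequences with $\rho_k\to\infty$ and $\epsilon_k\to0$, and for each $k$ let $(x^k,y^k,\lambda^k,z^k)\in\mathcal X\times\mathcal Y\times\Lambda\times\mathcal Y$ be an $\epsilon_k$-optimal solution of $\min_{x\in\mathcal X}\max_{y\in\mathcal Y,\lambda\in\Lambda}\min_{z\in\mathcal Y}P_{\rho_k}(x,y,\lambda,z)$. Then every accumulation point $(x_\infty,y_\infty,\lambda_\infty)$ of $\{(x^k,y^k,\lambda^k)\}$ is a global minimax point of the minimax bilevel problem, i.e. $(y_\infty,\lambda_\infty)\in\mathcal F_{\rm low}$, $x_\infty\in\arg\min_{x\in\mathcal X}\Phi(x)$, and $(y_\infty,\lambda_\infty)\in\arg\max_{(y,\lambda)\in\mathcal F_{\rm low}}f(x_\infty,y,\lambda)$.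
   Context: Standing setting. $\mathcal X\subset\mathbb R^{d_x}$, $\mathcal Y\subset\mathbb R^{d_y}$, $\Lambda\subset\mathbb R^{d_\lambda}$ are nonempty convex compact sets. $\bar f:\mathbb R^{d_x}\times\mathbb R^{d_y}\to\mathbb R$ is continuously differentiable with $\nabla\bar f$ Lipschitz on $\mathcal X\times\mathcal Y$; $A\in\mathbb R^{d_\lambda\times d_x}$, $B\in\mathbb R^{d_\lambda\times d_y}$, $c\in\mathbb R^{d_\lambda}$, and $f(x,y,\lambda):=\bar f(x,y)+\lambda^T(Ax+By-c)$. $g:\mathbb R^{d_y}\times\mathbb R^{d_\lambda}\to\mathbb R$ is continuously differentiable with $\nabla g$ Lipschitz on $\mathcal Y\times\Lambda$, and $g(\cdot,\lambda)$ is convex for each $\lambda\in\Lambda$. Definitions: $\mathcal F_{\rm low}:=\{(y,\lambda)\in\mathcal Y\times\Lambda:\ g(y,\lambda)=\min_{z\in\mathcal Y}g(z,\lambda)\}$; $P_\rho(x,y,\lambda,z):=f(x,y,\lambda)-\rho(g(y,\lambda)-g(z,\lambda))$; $F_\rho(x):=\max_{y\in\mathcal Y,\lambda\in\Lambda}\min_{z\in\mathcal Y}P_\rho(x,y,\lambda,z)$; $\Phi_\rho^*:=\min_{x\in\mathcal X}F_\rho(x)$; $\Phi(x):=\max_{(y,\lambda)\in\mathcal F_{\rm low}}f(x,y,\lambda)$. A point $(x_\epsilon,y_\epsilon,\lambda_\epsilon,z_\epsilon)\in\mathcal X\times\mathcal Y\times\Lambda\times\mathcal Y$ is an $\epsilon$-optimal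 solution of $\min_{x}\max_{y,\lambda}\min_{z}P_\rho$ if (i) $P_\rho(x_\epsilon,y_\epsilon,\lambda_\epsilon,z_\epsilon)-\min_{z\in\mathcal Y}P_\rho(x_\epsilon,y_\epsilon,\lambda_\epsilon,z)\le\epsilon$, (ii) $F_\rho(x_\epsilon)-P_\rho(x_\epsilon,y_\epsilon,\lambda_\epsilon,z_\epsilon)\le\epsilon$, and (iii) $P_\rho(x_\epsilon,y_\epsilon,\lambda_\epsilon,z_\epsilon)-\Phi_\rho^*\le\epsilon$. *)

theory Defs
  imports "HOL-Analysis.Analysis"
begin

definition fobj :: "(real^'dx \<Rightarrow> real^'dy \<Rightarrow> real) \<Rightarrow> real^'dx^'dl \<Rightarrow> real^'dy^'dl \<Rightarrow> real^'dl
    \<Rightarrow> real^'dx \<Rightarrow> real^'dy \<Rightarrow> real^'dl \<Rightarrow> real" where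
  "fobj fbar A B c x y l = fbar x y + l \<bullet> (A *v x + B *v y - c)"

definition Flow :: "(real^'dy) set \<Rightarrow> (real^'dl) set \<Rightarrow> (real^'dy \<Rightarrow> real^'dl \<Rightarrow> real)
    \<Rightarrow> ((real^'dy) \<times> (real^'dl)) set" where
  "Flow Y Lam g = {(y, l). y \<in> Y \<and> l \<in> Lam \<and> g y l = (INF z\<in>Y. g z l)}"

definition Ppen :: "real \<Rightarrow> (real^'dx \<Rightarrow> real^'dy \<Rightarrow> real) \<Rightarrow> real^'dx^'dl \<Rightarrow> real^'dy^'dl \<Rightarrow> real^'dl
    \<Rightarrow> (real^'dy \<Rightarrow> real^'dl \<Rightarrow> real)
    \<Rightarrow> real^'dx \<Rightarrow> real^'dy \<Rightarrow> real^'dl \<Rightarrow> real^'dy \<Rightarrow> real" where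
  "Ppen rho fbar A B c g x y l z = fobj fbar A B c x y l - rho * (g y l - g z l)"

definition Frho :: "(real^'dy) set \<Rightarrow> (real^'dl) set \<Rightarrow> real \<Rightarrow> (real^'dx \<Rightarrow> real^'dy \<Rightarrow> real)
    \<Rightarrow> real^'dx^'dl \<Rightarrow> real^'dy^'dl \<Rightarrow> real^'dl \<Rightarrow> (real^'dy \<Rightarrow> real^'dl \<Rightarrow> real)
    \<Rightarrow> real^'dx \<Rightarrow> real" where
  "Frho Y Lam rho fbar A B c g x =
     (SUP p\<in>Y \<times> Lam. INF z\<in>Y. Ppen rho fbar A B c g x (fst p) (snd p) z)"

definition Phistar :: "(real^'dx) set \<Rightarrow> (real^'dy) set \<Rightarrow> (real^'dl) set \<Rightarrow> real \<Rightarrow> (real^'dx \<Rightarrow> real^'dy \<Rightarrow> real)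
    \<Rightarrow> real^'dx^'dl \<Rightarrow> real^'dy^'dl \<Rightarrow> real^'dl \<Rightarrow> (real^'dy \<Rightarrow> real^'dl \<Rightarrow> real) \<Rightarrow> real" where
  "Phistar X Y Lam rho fbar A B c g = (INF x\<in>X. Frho Y Lam rho fbar A B c g x)"

definition Phi :: "(real^'dy) set \<Rightarrow> (real^'dl) set \<Rightarrow> (real^'dx \<Rightarrow> real^'dy \<Rightarrow> real)
    \<Rightarrow> real^'dx^'dl \<Rightarrow> real^'dy^'dl \<Rightarrow> real^'dl \<Rightarrow> (real^'dy \<Rightarrow> real^'dl \<Rightarrow> real)
    \<Rightarrow> real^'dx \<Rightarrow> real" where
  "Phi Y Lam fbar A B c g x = (SUP p\<in>Flow Y Lam g. fobj fbar A B c x (fst p) (snd p))"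

definition eps_optimal :: "(real^'dx) set \<Rightarrow> (real^'dy) set \<Rightarrow> (real^'dl) set \<Rightarrow> real \<Rightarrow> (real^'dx \<Rightarrow> real^'dy \<Rightarrow> real)
    \<Rightarrow> real^'dx^'dl \<Rightarrow> real^'dy^'dl \<Rightarrow> real^'dl \<Rightarrow> (real^'dy \<Rightarrow> real^'dl \<Rightarrow> real) \<Rightarrow> real
    \<Rightarrow> real^'dx \<Rightarrow> real^'dy \<Rightarrow> real^'dl \<Rightarrow> real^'dy \<Rightarrow> bool" where
  "eps_optimal X Y Lam rho fbar A B c g eps x y l z \<longleftrightarrow>
     x \<in> X \<and> y \<in> Y \<and> l \<in> Lam \<and> z \<in> Y \<and>
     Ppen rho fbar A B c g x y l z - (INF z'\<in>Y. Ppen rho fbar A B c g x y l z') \<le> eps \<and>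
     Frho Y Lam rho fbar A B c g x - Ppen rho fbar A B c g x y l z \<le> eps \<and>
     Ppen rho fbar A B c g x y l z - Phistar X Y Lam rho fbar A B c g \<le> eps"

end

theory Submission
  imports Defs
begin

(* For (y, lambda) in F_low the inner minimum over z of P_rho equals f, so F_rho(x) >= f(x, y, lambda)
   for every rho >= 0.  Together with epsilon-optimality this gives, for (y', lambda') in F_low, z in Y
   and any x in X,
     f(x_k, y', lambda') <= P_rho_k(x_k, y_k, lambda_k, z) + 2 eps_k   and
     f(x_k, y', lambda') <= F_rho_k(x) + 2 eps_k.
   The first inequality keeps rho_k (g(y_k, lambda_k) - g(z, lambda_k)) bounded, so the limit is
   lower-level optimal; with z = y_k it shows that (y_inf, lambda_inf) maximizes f(x_inf, -, -) over
   F_low.  By compactness the lower-level gap is bounded away from 0 wherever f(x, -, -) exceeds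
   Phi(x) + delta, hence limsup F_rho(x) <= Phi(x) as rho -> oo, and the second inequality yields
   Phi(x_inf) <= Phi(x). *)

locale bilevel_penalty =
  fixes X :: "(real^'dx) set" and Y :: "(real^'dy) set" and Lam :: "(real^'dl) set"
    and fbar :: "real^'dx \<Rightarrow> real^'dy \<Rightarrow> real"
    and A :: "real^'dx^'dl" and B :: "real^'dy^'dl" and c :: "real^'dl"
    and g :: "real^'dy \<Rightarrow> real^'dl \<Rightarrow> real"
  assumes compact_X: "compact X"
    and compact_Y: "compact Y" and Y_nonempty: "Y \<noteq> {}"
    and compact_Lam: "compact Lam" and Lam_nonempty: "Lam \<noteq> {}"
    and continuous_fbar: "continuous_on (X \<times> Y) (case_prod fbar)"
    and continuous_g: "continuous_on (Y \<times> Lam) (case_prod g)"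
begin

abbreviation f where "f \<equiv> fobj fbar A B c"
abbreviation P where "P \<rho> \<equiv> Ppen \<rho> fbar A B c g"
abbreviation F where "F \<rho> \<equiv> Frho Y Lam \<rho> fbar A B c g"
abbreviation \<Phi> where "\<Phi> \<equiv> Phi Y Lam fbar A B c g"
abbreviation \<Phi>star where "\<Phi>star \<rho> \<equiv> Phistar X Y Lam \<rho> fbar A B c g"

lemma continuous_fobj: "continuous_on (X \<times> Y \<times> Lam) (\<lambda>(x, y, l). f x y l)"
proof -
  have "continuous_on (X \<times> Y \<times> Lam) (case_prod fbar \<circ> (\<lambda>(x, y, l). (x, y)))"
    by (intro continuous_on_compose continuous_on_subset[OF continuous_fbar])
      (auto simp: case_prod_unfold intro!: continuous_intros)
  then show ?thesis
    unfolding fobj_def case_prod_unfold comp_def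
    by (intro continuous_intros bounded_linear.continuous_on[OF matrix_vector_mul_bounded_linear])
      simp
qed

lemma bounded_fobj:
  obtains M where "\<And>x y l. x \<in> X \<Longrightarrow> y \<in> Y \<Longrightarrow> l \<in> Lam \<Longrightarrow> \<bar>f x y l\<bar> \<le> M"
  using continuous_on_compact_bound[OF compact_Times[OF compact_X compact_Times[OF compact_Y compact_Lam]]
      continuous_fobj]
  by (metis mem_Times_iff fst_conv snd_conv real_norm_def case_prod_conv)

lemma bounded_g:
  obtains G where "\<And>y l. y \<in> Y \<Longrightarrow> l \<in> Lam \<Longrightarrow> \<bar>g y l\<bar> \<le> G"
  using continuous_on_compact_bound[OF compact_Times[OF compact_Y compact_Lam] continuous_g]
  by (metis mem_Times_iff fst_conv snd_conv real_norm_def case_prod_conv)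

lemma Flow_iff: "(y, l) \<in> Flow Y Lam g \<longleftrightarrow> y \<in> Y \<and> l \<in> Lam \<and> (\<forall>z\<in>Y. g y l \<le> g z l)"
proof -
  obtain G where G: "\<And>y l. y \<in> Y \<Longrightarrow> l \<in> Lam \<Longrightarrow> \<bar>g y l\<bar> \<le> G"
    using bounded_g by blast
  have "bdd_below ((\<lambda>z. g z l) ` Y)" if "l \<in> Lam"
    using G[OF _ that] by (intro bdd_belowI2[where m="-G"]) force
  then show ?thesis
    unfolding Flow_def
    by (auto intro!: antisym cINF_greatest[OF Y_nonempty] cINF_lower)
qed

lemma Flow_nonempty: "Flow Y Lam g \<noteq> {}"
proof -
  obtain l where l: "l \<in> Lam"
    using Lam_nonempty by blast
  have "continuous_on Y (case_prod g \<circ> (\<lambda>y. (y, l)))"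
    by (intro continuous_on_compose continuous_on_subset[OF continuous_g])
      (auto intro!: continuous_intros l)
  then obtain y where "y \<in> Y" "\<forall>z\<in>Y. g y l \<le> g z l"
    using continuous_attains_inf[OF compact_Y Y_nonempty] by (auto simp: comp_def)
  then show ?thesis
    using l Flow_iff by blast
qed

lemma bdd_below_Ppen:
  assumes "0 \<le> \<rho>" "l \<in> Lam"
  shows "bdd_below (P \<rho> x y l ` Y)"
proof -
  obtain G where G: "\<And>y l. y \<in> Y \<Longrightarrow> l \<in> Lam \<Longrightarrow> \<bar>g y l\<bar> \<le> G"
    using bounded_g by blast
  show ?thesis
  proof (rule bdd_belowI2)
    fix z assume "z \<in> Y"
    then have "\<rho> * g z l \<ge> \<rho> * -G"
      using G assms by (intro mult_left_mono) force+
    then show "f x y l - \<rho> * g y l + \<rho> * -G \<le> P \<rho> x y l z"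
      unfolding Ppen_def right_diff_distrib by linarith
  qed
qed

lemma INF_Ppen_lower:
  assumes "0 \<le> \<rho>" "l \<in> Lam" "z \<in> Y"
  shows "(INF z'\<in>Y. P \<rho> x y l z') \<le> P \<rho> x y l z"
  using cINF_lower[OF bdd_below_Ppen[OF assms(1,2)] assms(3)] .

lemma INF_Ppen_Flow:
  assumes "(y, l) \<in> Flow Y Lam g" "0 \<le> \<rho>"
  shows "(INF z\<in>Y. P \<rho> x y l z) = f x y l"
proof (rule antisym)
  show "(INF z\<in>Y. P \<rho> x y l z) \<le> f x y l"
    using INF_Ppen_lower[OF assms(2), of l y x y] assms(1) by (simp add: Flow_iff Ppen_def)
  show "f x y l \<le> (INF z\<in>Y. P \<rho> x y l z)"
    using assms by (auto simp: Flow_iff Ppen_def mult_nonneg_nonpos intro!: cINF_greatest[OF Y_nonempty])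
qed

lemma INF_Ppen_le_Frho:
  assumes "0 \<le> \<rho>" "x \<in> X" "y \<in> Y" "l \<in> Lam"
  shows "(INF z\<in>Y. P \<rho> x y l z) \<le> F \<rho> x"
proof -
  obtain M where M: "\<And>x y l. x \<in> X \<Longrightarrow> y \<in> Y \<Longrightarrow> l \<in> Lam \<Longrightarrow> \<bar>f x y l\<bar> \<le> M"
    using bounded_fobj by blast
  have "bdd_above ((\<lambda>p. INF z\<in>Y. P \<rho> x (fst p) (snd p) z) ` (Y \<times> Lam))"
  proof (rule bdd_aboveI2)
    fix p assume p: "p \<in> Y \<times> Lam"
    then have "(INF z\<in>Y. P \<rho> x (fst p) (snd p) z) \<le> P \<rho> x (fst p) (snd p) (fst p)"
      by (intro INF_Ppen_lower assms(1)) auto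
    also have "\<dots> \<le> M"
      using M[OF assms(2)] p by (force simp: Ppen_def dest: abs_le_D1)
    finally show "(INF z\<in>Y. P \<rho> x (fst p) (snd p) z) \<le> M" .
  qed
  then show ?thesis
    unfolding Frho_def using assms(3,4) by (auto intro: cSUP_upper2)
qed

lemma fobj_le_Frho:
  assumes "0 \<le> \<rho>" "x \<in> X" "(y, l) \<in> Flow Y Lam g"
  shows "f x y l \<le> F \<rho> x"
  using INF_Ppen_le_Frho[OF assms(1,2), of y l] INF_Ppen_Flow[OF assms(3,1), of x] assms(3)
  by (simp add: Flow_iff)

lemma Phistar_le_Frho:
  assumes "0 \<le> \<rho>" "x \<in> X"
  shows "\<Phi>star \<rho> \<le> F \<rho> x"
proof -
  obtain M where M: "\<And>x y l. x \<in> X \<Longrightarrow> y \<in> Y \<Longrightarrow> l \<in> Lam \<Longrightarrow> \<bar>f x y l\<bar> \<le> M"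
    using bounded_fobj by blast
  obtain y l where yl: "(y, l) \<in> Flow Y Lam g"
    using Flow_nonempty by auto
  have "-M \<le> F \<rho> x'" if "x' \<in> X" for x'
    using fobj_le_Frho[OF assms(1) that yl] M[OF that, of y l] yl by (auto simp: Flow_iff)
  then show ?thesis
    unfolding Phistar_def by (intro cINF_lower[OF _ assms(2)] bdd_belowI2)
qed

lemma fobj_le_Phi:
  assumes "x \<in> X" "(y, l) \<in> Flow Y Lam g"
  shows "f x y l \<le> \<Phi> x"
proof -
  obtain M where M: "\<And>x y l. x \<in> X \<Longrightarrow> y \<in> Y \<Longrightarrow> l \<in> Lam \<Longrightarrow> \<bar>f x y l\<bar> \<le> M"
    using bounded_fobj by blast
  have "bdd_above ((\<lambda>p. f x (fst p) (snd p)) ` Flow Y Lam g)"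
    using M[OF assms(1)] by (intro bdd_aboveI2[where M=M]) (force simp: Flow_iff)
  then show ?thesis
    unfolding Phi_def using cSUP_upper[OF assms(2)] by fastforce
qed

lemma Phi_least:
  assumes "\<And>y l. (y, l) \<in> Flow Y Lam g \<Longrightarrow> f x y l \<le> a"
  shows "\<Phi> x \<le> a"
  unfolding Phi_def using assms by (auto intro: cSUP_least[OF Flow_nonempty])

lemma eps_optimal_fobj_le_Ppen:
  assumes opt: "eps_optimal X Y Lam \<rho> fbar A B c g \<epsilon> x y l z"
    and "0 \<le> \<rho>" "(y', l') \<in> Flow Y Lam g" "z' \<in> Y"
  shows "f x y' l' \<le> P \<rho> x y l z' + 2 * \<epsilon>"
proof -
  have "f x y' l' \<le> F \<rho> x"
    using opt assms(2,3) by (intro fobj_le_Frho) (auto simp: eps_optimal_def)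
  moreover have "(INF z\<in>Y. P \<rho> x y l z) \<le> P \<rho> x y l z'"
    using opt assms(2,4) by (intro INF_Ppen_lower) (auto simp: eps_optimal_def)
  ultimately show ?thesis
    using opt unfolding eps_optimal_def by linarith
qed

lemma eps_optimal_fobj_le_Frho:
  assumes opt: "eps_optimal X Y Lam \<rho> fbar A B c g \<epsilon> x y l z"
    and "0 \<le> \<rho>" "(y', l') \<in> Flow Y Lam g" "x' \<in> X"
  shows "f x y' l' \<le> F \<rho> x' + 2 * \<epsilon>"
proof -
  have "f x y' l' \<le> F \<rho> x"
    using opt assms(2,3) by (intro fobj_le_Frho) (auto simp: eps_optimal_def)
  moreover have "\<Phi>star \<rho> \<le> F \<rho> x'"
    using Phistar_le_Frho[OF assms(2,4)] .
  ultimately show ?thesis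
    using opt unfolding eps_optimal_def by linarith
qed

lemma tendsto_fobj:
  assumes "((\<lambda>k. (a k, b k, d k)) \<longlongrightarrow> (a0, b0, d0)) net" "(a0, b0, d0) \<in> X \<times> Y \<times> Lam"
    and "\<forall>\<^sub>F k in net. (a k, b k, d k) \<in> X \<times> Y \<times> Lam"
  shows "((\<lambda>k. f (a k) (b k) (d k)) \<longlongrightarrow> f a0 b0 d0) net"
  using continuous_on_tendsto_compose[OF continuous_fobj assms] by simp

lemma tendsto_g:
  assumes "((\<lambda>k. (b k, d k)) \<longlongrightarrow> (b0, d0)) net" "(b0, d0) \<in> Y \<times> Lam"
    and "\<forall>\<^sub>F k in net. (b k, d k) \<in> Y \<times> Lam"
  shows "((\<lambda>k. g (b k) (d k)) \<longlongrightarrow> g b0 d0) net"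
  using continuous_on_tendsto_compose[OF continuous_g assms] by simp

lemma lower_level_gap:
  assumes "compact K" "K \<subseteq> Y \<times> Lam" "K \<inter> Flow Y Lam g = {}"
  obtains \<eta> where "\<eta> > 0" "\<And>y l. (y, l) \<in> K \<Longrightarrow> \<exists>z\<in>Y. g z l + \<eta> \<le> g y l"
proof -
  have "\<exists>\<eta>>0. \<forall>(y, l)\<in>K. \<exists>z\<in>Y. g z l + \<eta> \<le> g y l"
  proof (rule ccontr)
    assume "\<not> ?thesis"
    then have "\<forall>n. \<exists>q\<in>K. \<forall>z\<in>Y. g (fst q) (snd q) < g z (snd q) + inverse (Suc n)"
      by (metis (no_types, lifting) case_prod_beta inverse_positive_iff_positive not_le
          of_nat_0_less_iff zero_less_Suc)
    then obtain q where q_K: "\<And>n. q n \<in> K"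
      and q_gap: "\<And>n z. z \<in> Y \<Longrightarrow> g (fst (q n)) (snd (q n)) < g z (snd (q n)) + inverse (Suc n)"
      by metis
    obtain q0 s where "q0 \<in> K" "strict_mono s" and q_s: "(q \<circ> s) \<longlonglongrightarrow> q0"
      using seq_compactE[OF compact_imp_seq_compact[OF assms(1)]] q_K by metis
    have in_YL: "\<And>n. q n \<in> Y \<times> Lam" "q0 \<in> Y \<times> Lam"
      using q_K \<open>q0 \<in> K\<close> assms(2) by auto
    have "g (fst q0) (snd q0) \<le> g z (snd q0)" if "z \<in> Y" for z
    proof (rule tendsto_le[OF trivial_limit_sequentially])
      show "(\<lambda>n. g (fst (q (s n))) (snd (q (s n)))) \<longlonglongrightarrow> g (fst q0) (snd q0)"
        using continuous_on_tendsto_compose[OF continuous_g q_s] in_YL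
        by (simp add: comp_def case_prod_unfold)
      have "(\<lambda>n. (z, snd (q (s n)))) \<longlonglongrightarrow> (z, snd q0)"
        using q_s by (intro tendsto_intros) (simp add: comp_def)
      then have "(\<lambda>n. g z (snd (q (s n)))) \<longlonglongrightarrow> g z (snd q0)"
        using continuous_on_tendsto_compose[OF continuous_g] in_YL that
        by (fastforce simp: mem_Times_iff)
      moreover have "(\<lambda>n. inverse (real (Suc (s n)))) \<longlonglongrightarrow> 0"
        using LIMSEQ_subseq_LIMSEQ[OF LIMSEQ_inverse_real_of_nat \<open>strict_mono s\<close>]
        by (simp add: comp_def)
      ultimately show "(\<lambda>n. g z (snd (q (s n))) + inverse (Suc (s n))) \<longlonglongrightarrow> g z (snd q0)"
        using tendsto_add by fastforce
      show "\<forall>\<^sub>F n in sequentially.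
          g (fst (q (s n))) (snd (q (s n))) \<le> g z (snd (q (s n))) + inverse (Suc (s n))"
        using q_gap[OF that] by (simp add: less_imp_le)
    qed
    then have "q0 \<in> Flow Y Lam g"
      using in_YL Flow_iff[of "fst q0" "snd q0"] by (simp add: mem_Times_iff)
    then show False
      using \<open>q0 \<in> K\<close> assms(3) by blast
  qed
  then show ?thesis
    using that by blast
qed

lemma compact_fobj_superlevel:
  assumes "x \<in> X"
  shows "compact {(y, l) \<in> Y \<times> Lam. a \<le> f x y l}"
proof -
  have "continuous_on (Y \<times> Lam) ((\<lambda>(x, y, l). f x y l) \<circ> (\<lambda>q. (x, q)))"
    by (intro continuous_on_compose continuous_on_subset[OF continuous_fobj])
      (auto intro!: continuous_intros assms)
  then have "closed ((Y \<times> Lam) \<inter> (\<lambda>(y, l). f x y l) -` {a..})"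
    using compact_Y compact_Lam
    by (intro continuous_closed_preimage)
      (auto simp: comp_def case_prod_unfold compact_imp_closed closed_Times)
  then have "compact ((Y \<times> Lam) \<inter> ((Y \<times> Lam) \<inter> (\<lambda>(y, l). f x y l) -` {a..}))"
    by (intro compact_Int_closed compact_Times compact_Y compact_Lam)
  moreover have "(Y \<times> Lam) \<inter> ((Y \<times> Lam) \<inter> (\<lambda>(y, l). f x y l) -` {a..})
      = {(y, l) \<in> Y \<times> Lam. a \<le> f x y l}"
    by auto
  ultimately show ?thesis
    by simp
qed

lemma eventually_Frho_le_Phi:
  assumes "x \<in> X" "\<delta> > 0"
  shows "\<forall>\<^sub>F \<rho> in at_top. F \<rho> x \<le> \<Phi> x + \<delta>"
proof -
  obtain M where M: "\<And>x y l. x \<in> X \<Longrightarrow> y \<in> Y \<Longrightarrow> l \<in> Lam \<Longrightarrow> \<bar>f x y l\<bar> \<le> M"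
    using bounded_fobj by blast
  define K where "K = {(y, l) \<in> Y \<times> Lam. \<Phi> x + \<delta> \<le> f x y l}"
  have "compact K"
    unfolding K_def using compact_fobj_superlevel[OF assms(1)] .
  moreover have "K \<inter> Flow Y Lam g = {}"
    using fobj_le_Phi[OF assms(1)] assms(2) by (force simp: K_def)
  ultimately obtain \<eta> where \<eta>: "\<eta> > 0" "\<And>y l. (y, l) \<in> K \<Longrightarrow> \<exists>z\<in>Y. g z l + \<eta> \<le> g y l"
    using lower_level_gap K_def by blast
  have "\<forall>\<^sub>F \<rho> in at_top. max 0 ((M - \<Phi> x) / \<eta>) \<le> \<rho>"
    by (rule eventually_ge_at_top)
  then show ?thesis
  proof (rule eventually_mono)
    fix \<rho> :: real assume "max 0 ((M - \<Phi> x) / \<eta>) \<le> \<rho>"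
    then have "0 \<le> \<rho>" "M - \<Phi> x \<le> \<rho> * \<eta>"
      using \<eta>(1) by (auto simp: pos_divide_le_eq)
    have "(INF z\<in>Y. P \<rho> x y l z) \<le> \<Phi> x + \<delta>" if "y \<in> Y" "l \<in> Lam" for y l
    proof (cases "(y, l) \<in> K")
      case True
      then obtain z where "z \<in> Y" "g z l + \<eta> \<le> g y l"
        using \<eta>(2) by blast
      then have "\<rho> * \<eta> \<le> \<rho> * (g y l - g z l)"
        using \<open>0 \<le> \<rho>\<close> by (intro mult_left_mono) auto
      moreover have "(INF z\<in>Y. P \<rho> x y l z) \<le> f x y l - \<rho> * (g y l - g z l)"
        using INF_Ppen_lower[OF \<open>0 \<le> \<rho>\<close> that(2) \<open>z \<in> Y\<close>] by (simp add: Ppen_def)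
      moreover have "f x y l \<le> M"
        using M[OF assms(1) that] by simp
      ultimately show ?thesis
        using \<open>M - \<Phi> x \<le> \<rho> * \<eta>\<close> assms(2) by linarith
    next
      case False
      then have "f x y l < \<Phi> x + \<delta>"
        using that by (simp add: K_def)
      then show ?thesis
        using INF_Ppen_lower[OF \<open>0 \<le> \<rho>\<close> that(2) that(1), of x y] by (simp add: Ppen_def)
    qed
    then show "F \<rho> x \<le> \<Phi> x + \<delta>"
      unfolding Frho_def using Y_nonempty Lam_nonempty by (auto intro!: cSUP_least)
  qed
qed

end

locale eps_optimal_sequence = bilevel_penalty X Y Lam fbar A B c g
  for X :: "(real^'dx) set" and Y :: "(real^'dy) set" and Lam :: "(real^'dl) set"
    and fbar A B c g +
  fixes rho eps :: "nat \<Rightarrow> real"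
    and xs :: "nat \<Rightarrow> real^'dx" and ys zs :: "nat \<Rightarrow> real^'dy" and ls :: "nat \<Rightarrow> real^'dl"
    and xinf :: "real^'dx" and yinf :: "real^'dy" and linf :: "real^'dl"
  assumes rho_pos: "\<And>k. 0 < rho k" and rho_to_infinity: "filterlim rho at_top sequentially"
    and eps_to_0: "eps \<longlonglongrightarrow> 0"
    and optimal: "\<And>k. eps_optimal X Y Lam (rho k) fbar A B c g (eps k) (xs k) (ys k) (ls k) (zs k)"
    and convergent: "((\<lambda>k. (xs k, ys k, ls k)) \<longlongrightarrow> (xinf, yinf, linf)) sequentially"
begin

lemma iterates_mem: "(xs k, ys k, ls k) \<in> X \<times> Y \<times> Lam"
  using optimal[of k] by (simp add: eps_optimal_def)

lemma limit_mem: "(xinf, yinf, linf) \<in> X \<times> Y \<times> Lam"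
  using compact_X compact_Y compact_Lam iterates_mem
  by (intro Lim_in_closed_set[OF _ _ trivial_limit_sequentially convergent])
    (auto intro: closed_Times compact_imp_closed)

lemma tendsto_iterates: "xs \<longlonglongrightarrow> xinf" "ys \<longlonglongrightarrow> yinf" "ls \<longlonglongrightarrow> linf"
  using tendsto_fst[OF convergent] tendsto_fst[OF tendsto_snd[OF convergent]]
    tendsto_snd[OF tendsto_snd[OF convergent]]
  by simp_all

lemma limit_in_Flow: "(yinf, linf) \<in> Flow Y Lam g"
proof -
  obtain M where M: "\<And>x y l. x \<in> X \<Longrightarrow> y \<in> Y \<Longrightarrow> l \<in> Lam \<Longrightarrow> \<bar>f x y l\<bar> \<le> M"
    using bounded_fobj by blast
  obtain y0 l0 where yl0: "(y0, l0) \<in> Flow Y Lam g"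
    using Flow_nonempty by auto
  have "g yinf linf \<le> g z linf" if z: "z \<in> Y" for z
  proof -
    have "g (ys k) (ls k) - g z (ls k) \<le> (2 * M + 2 * eps k) / rho k" for k
    proof -
      have "f (xs k) y0 l0 \<le> f (xs k) (ys k) (ls k) - rho k * (g (ys k) (ls k) - g z (ls k)) + 2 * eps k"
        using eps_optimal_fobj_le_Ppen[OF optimal less_imp_le[OF rho_pos] yl0 z]
        by (simp add: Ppen_def)
      moreover have "\<bar>f (xs k) y0 l0\<bar> \<le> M" "\<bar>f (xs k) (ys k) (ls k)\<bar> \<le> M"
        using M iterates_mem[of k] yl0 by (auto simp: Flow_iff)
      ultimately show ?thesis
        by (simp add: pos_le_divide_eq[OF rho_pos] mult.commute)
    qed
    moreover have "(\<lambda>k. g (ys k) (ls k) - g z (ls k)) \<longlonglongrightarrow> g yinf linf - g z linf"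
      using tendsto_iterates limit_mem iterates_mem z
      by (intro tendsto_diff tendsto_g) (auto intro!: tendsto_intros)
    moreover have "(\<lambda>k. (2 * M + 2 * eps k) / rho k) \<longlonglongrightarrow> 0"
      using eps_to_0 filterlim_at_top_imp_at_infinity[OF rho_to_infinity]
      by (intro tendsto_divide_0[where c="2 * M + 2 * 0"] tendsto_intros)
    ultimately have "g yinf linf - g z linf \<le> 0"
      by (intro LIMSEQ_le) auto
    then show ?thesis
      by simp
  qed
  then show ?thesis
    using limit_mem by (simp add: Flow_iff)
qed

lemma fobj_le_limit:
  assumes "(y, l) \<in> Flow Y Lam g"
  shows "f xinf y l \<le> f xinf yinf linf"
proof (rule LIMSEQ_le)
  show "(\<lambda>k. f (xs k) y l) \<longlonglongrightarrow> f xinf y l"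
    using tendsto_iterates limit_mem iterates_mem assms
    by (intro tendsto_fobj) (auto intro!: tendsto_intros simp: Flow_iff)
  have "(\<lambda>k. f (xs k) (ys k) (ls k)) \<longlonglongrightarrow> f xinf yinf linf"
    using tendsto_fobj[OF convergent limit_mem] iterates_mem by simp
  then have "(\<lambda>k. f (xs k) (ys k) (ls k) + 2 * eps k) \<longlonglongrightarrow> f xinf yinf linf + 2 * 0"
    using eps_to_0 by (intro tendsto_add tendsto_mult tendsto_const)
  then show "(\<lambda>k. f (xs k) (ys k) (ls k) + 2 * eps k) \<longlonglongrightarrow> f xinf yinf linf"
    by simp
  have "f (xs k) y l \<le> f (xs k) (ys k) (ls k) + 2 * eps k" for k
    using eps_optimal_fobj_le_Ppen[OF optimal[of k] less_imp_le[OF rho_pos] assms, of "ys k"]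
      iterates_mem[of k]
    by (simp add: Ppen_def)
  then show "\<exists>N. \<forall>k\<ge>N. f (xs k) y l \<le> f (xs k) (ys k) (ls k) + 2 * eps k"
    by blast
qed

lemma Phi_limit: "\<Phi> xinf = f xinf yinf linf"
  using Phi_least[OF fobj_le_limit] fobj_le_Phi[OF _ limit_in_Flow] limit_mem
  by (auto intro: antisym)

lemma limit_minimizes_Phi:
  assumes "x \<in> X"
  shows "\<Phi> xinf \<le> \<Phi> x"
  unfolding Phi_limit
proof (rule field_le_epsilon)
  fix \<delta> :: real assume "0 < \<delta>"
  have "\<forall>\<^sub>F k in sequentially. f (xs k) yinf linf - 2 * eps k \<le> \<Phi> x + \<delta>"
    using eventually_compose_filterlim[OF eventually_Frho_le_Phi[OF assms \<open>0 < \<delta>\<close>] rho_to_infinity]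
  proof (rule eventually_mono)
    fix k assume "F (rho k) x \<le> \<Phi> x + \<delta>"
    then show "f (xs k) yinf linf - 2 * eps k \<le> \<Phi> x + \<delta>"
      using eps_optimal_fobj_le_Frho[OF optimal[of k] less_imp_le[OF rho_pos] limit_in_Flow assms]
      by linarith
  qed
  moreover have "(\<lambda>k. f (xs k) yinf linf - 2 * eps k) \<longlonglongrightarrow> f xinf yinf linf - 2 * 0"
    using tendsto_iterates limit_mem iterates_mem eps_to_0
    by (intro tendsto_intros tendsto_fobj) auto
  ultimately show "f xinf yinf linf \<le> \<Phi> x + \<delta>"
    using tendsto_upperbound[OF _ _ trivial_limit_sequentially] by fastforce
qed

end

theorem mainTheorem3:
  fixes X :: "(real^'dx) set" and Y :: "(real^'dy) set" and Lam :: "(real^'dl) set"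
    and fbar :: "real^'dx \<Rightarrow> real^'dy \<Rightarrow> real"
    and Gf :: "(real^'dx) \<times> (real^'dy) \<Rightarrow> (real^'dx) \<times> (real^'dy)"
    and A :: "real^'dx^'dl" and B :: "real^'dy^'dl" and c :: "real^'dl"
    and g :: "real^'dy \<Rightarrow> real^'dl \<Rightarrow> real"
    and Gg :: "(real^'dy) \<times> (real^'dl) \<Rightarrow> (real^'dy) \<times> (real^'dl)"
    and rho eps :: "nat \<Rightarrow> real"
    and xs :: "nat \<Rightarrow> real^'dx" and ys zs :: "nat \<Rightarrow> real^'dy" and ls :: "nat \<Rightarrow> real^'dl"
    and xinf :: "real^'dx" and yinf :: "real^'dy" and linf :: "real^'dl"
  assumes X: "convex X" "compact X" "X \<noteq> {}"
    and Y: "convex Y" "compact Y" "Y \<noteq> {}"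
    and Lam: "convex Lam" "compact Lam" "Lam \<noteq> {}"
    and fbar_diff: "\<And>p. ((\<lambda>q. fbar (fst q) (snd q)) has_derivative (\<lambda>h. Gf p \<bullet> h)) (at p)"
    and fbar_C1: "continuous_on UNIV Gf"
    and fbar_Lip: "\<exists>L. \<forall>p\<in>X \<times> Y. \<forall>q\<in>X \<times> Y. norm (Gf p - Gf q) \<le> L * norm (p - q)"
    and g_diff: "\<And>p. ((\<lambda>q. g (fst q) (snd q)) has_derivative (\<lambda>h. Gg p \<bullet> h)) (at p)"
    and g_C1: "continuous_on UNIV Gg"
    and g_Lip: "\<exists>L. \<forall>p\<in>Y \<times> Lam. \<forall>q\<in>Y \<times> Lam. norm (Gg p - Gg q) \<le> L * norm (p - q)"
    and g_convex: "\<And>l. l \<in> Lam \<Longrightarrow> convex_on UNIV (\<lambda>y. g y l)"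
    and rho_pos: "\<And>k. rho k > 0" and rho_lim: "filterlim rho at_top sequentially"
    and eps_pos: "\<And>k. eps k > 0" and eps_lim: "eps \<longlonglongrightarrow> 0"
    and opt: "\<And>k. eps_optimal X Y Lam (rho k) fbar A B c g (eps k) (xs k) (ys k) (ls k) (zs k)"
    and acc: "\<exists>r. strict_mono r \<and> ((\<lambda>k. (xs (r k), ys (r k), ls (r k))) \<longlongrightarrow> (xinf, yinf, linf)) sequentially"
  shows "(yinf, linf) \<in> Flow Y Lam g
    \<and> xinf \<in> X \<and> (\<forall>x\<in>X. Phi Y Lam fbar A B c g xinf \<le> Phi Y Lam fbar A B c g x)
    \<and> (\<forall>p\<in>Flow Y Lam g. fobj fbar A B c xinf (fst p) (snd p) \<le> fobj fbar A B c xinf yinf linf)"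
proof -
  obtain r where r: "strict_mono r"
    and lim: "((\<lambda>k. (xs (r k), ys (r k), ls (r k))) \<longlongrightarrow> (xinf, yinf, linf)) sequentially"
    using acc by blast
  have continuous: "continuous_on S (case_prod fbar)" "continuous_on T (case_prod g)" for S T
    using has_derivative_continuous[OF fbar_diff] has_derivative_continuous[OF g_diff]
    by (auto simp: case_prod_unfold intro!: continuous_at_imp_continuous_on)
  interpret eps_optimal_sequence X Y Lam fbar A B c g "rho \<circ> r" "eps \<circ> r"
      "xs \<circ> r" "ys \<circ> r" "zs \<circ> r" "ls \<circ> r" xinf yinf linf
  proof
    show "filterlim (rho \<circ> r) at_top sequentially"
      using filterlim_compose[OF rho_lim filterlim_subseq[OF r]] by (simp add: comp_def)
    show "(eps \<circ> r) \<longlonglongrightarrow> 0"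
      using LIMSEQ_subseq_LIMSEQ[OF eps_lim r] .
  qed (use X Y Lam continuous rho_pos opt lim in simp_all)
  show ?thesis
    using limit_in_Flow limit_mem limit_minimizes_Phi fobj_le_limit Phi_limit by auto
qed

end
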